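(* Let $\boldsymbol{W}=\sum_{i=1}^d\lambda_i\boldsymbol{u}_i\boldsymbol{u}_i^\top$ be a positive definite density matrix ($\{\boldsymbol{u}_i\}$ orthonormal, $\lambda_i>0$, $\sum_i\lambda_i=1$) and $\boldsymbol{L}$ a fixed symmetric $d\times d$ matrix. Draw $I,J$ independently with $\Pr(I=i)=\Pr(J=i)=\lambda_i$. If $I=J$ set $\boldsymbol{w}=\boldsymbol{u}_I$; if $I\ne J$ draw a uniform sign $s\in\{-1,1\}$ and set $\boldsymbol{w}=(\boldsymbol{u}_I+s\boldsymbol{u}_J)/\sqrt2$. Let $\ell=\boldsymbol{w}^\top\boldsymbol{L}\boldsymbol{w}$ and \[ \widetilde{\boldsymbol{L}}=\begin{cases}\frac{\ell}{\lambda_I^2}\boldsymbol{u}_I\boldsymbol{u}_I^\top, & I=J,\\ \frac{s\ell}{2\lambda_I\lambda_J}(\boldsymbol{u}_I\boldsymbol{u}_J^\top+\boldsymbol{u}_J\boldsymbol{u}_I^\top), & I\ne J.\end{cases} \] Then $\|\boldsymbol{w}\|=1$, $\mathbb{E}[\boldsymbol{w}\boldsymbol{w}^\top]=\boldsymbol{W}$, and $\mathbb{E}[\widetilde{\boldsymbol{L}}]=\boldsymbol{L}$.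
   Context: A density matrix is a symmetric positive semidefinite matrix of trace $1$. *)

theory Defs
  imports "HOL-Analysis.Analysis" "HOL-Probability.Probability"
begin

text \<open>Dimension d is the cardinality of the finite index type 'n.
  Vectors are real^'n, matrices real^'n^'n.\<close>

definition outer :: "real^'n \<Rightarrow> real^'n \<Rightarrow> real^'n^'n" where
  "outer u v = (\<chi> i j. u $ i * v $ j)"

definition index_pmf :: "('n::finite \<Rightarrow> real) \<Rightarrow> 'n pmf" where
  "index_pmf lam = embed_pmf lam"

text \<open>Joint law of (I, J, s): I, J independent with law lam, s uniform on {-1,1},
  independent of I and J (s is ignored when I = J).\<close>
definition sample_pmf :: "('n::finite \<Rightarrow> real) \<Rightarrow> ('n \<times> 'n \<times> real) pmf" where
  "sample_pmf lam =
     bind_pmf (index_pmf lam) (\<lambda>I.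
     bind_pmf (index_pmf lam) (\<lambda>J.
     map_pmf (\<lambda>s. (I, J, s)) (pmf_of_set {-1, 1::real})))"

definition sample_w :: "('n \<Rightarrow> real^'n) \<Rightarrow> 'n \<times> 'n \<times> real \<Rightarrow> real^'n" where
  "sample_w u \<omega> = (case \<omega> of (I, J, s) \<Rightarrow>
     if I = J then u I else (1 / sqrt 2) *\<^sub>R (u I + s *\<^sub>R u J))"

definition sample_ell :: "('n \<Rightarrow> real^'n) \<Rightarrow> real^'n^'n \<Rightarrow> 'n \<times> 'n \<times> real \<Rightarrow> real" where
  "sample_ell u L \<omega> = sample_w u \<omega> \<bullet> (L *v sample_w u \<omega>)"

definition sample_Ltilde ::
  "('n \<Rightarrow> real) \<Rightarrow> ('n \<Rightarrow> real^'n) \<Rightarrow> real^'n^'n \<Rightarrow> 'n \<times> 'n \<times> real \<Rightarrow> real^'n^'n" where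
  "sample_Ltilde lam u L \<omega> = (case \<omega> of (I, J, s) \<Rightarrow>
     if I = J then (sample_ell u L \<omega> / (lam I)^2) *\<^sub>R outer (u I) (u I)
     else (s * sample_ell u L \<omega> / (2 * lam I * lam J)) *\<^sub>R (outer (u I) (u J) + outer (u J) (u I)))"

end

theory Submission
  imports Defs
begin

text \<open>Averaging over the sign s first removes it: the two values of w w^T add up to
  u_I u_I^T + u_J u_J^T, and the two values of w^T L w differ by 2 u_I^T L u_J, so the
  weight \<lambda>_I \<lambda>_J cancels the normalisation in the estimator. The remaining sums over the
  symmetric weights \<lambda>_I \<lambda>_J give \<Sum>_i \<lambda>_i u_i u_i^T = W and
  \<Sum>_{i,j} (u_i^T L u_j) u_i u_j^T, which is L because an orthonormal basis satisfies
  \<Sum>_i u_i u_i^T = 1.\<close>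

lemma outer_scaleR_left: "outer (c *\<^sub>R x) y = c *\<^sub>R outer x y"
  by (simp add: outer_def vec_eq_iff)

lemma outer_scaleR_right: "outer x (c *\<^sub>R y) = c *\<^sub>R outer x y"
  by (simp add: outer_def vec_eq_iff mult.left_commute)

lemma outer_sum_left: "outer (\<Sum>i\<in>S. f i) y = (\<Sum>i\<in>S. outer (f i) y)"
  by (simp add: outer_def vec_eq_iff sum_component sum_distrib_right)

lemma outer_mult_vector: "outer x y *v z = (y \<bullet> z) *\<^sub>R x"
  by (simp add: outer_def vec_eq_iff matrix_vector_mult_def inner_vec_def sum_distrib_left mult_ac)

lemma matrix_mult_outer: "A ** outer x y = outer (A *v x) y"
  by (simp add: outer_def vec_eq_iff matrix_matrix_mult_def matrix_vector_mult_def sum_distrib_right mult.assoc)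

lemma matrix_mult_sum_right: "A ** (\<Sum>i\<in>S. f i) = (\<Sum>i\<in>S. A ** f i)"
  by (induction S rule: infinite_finite_induct) (simp_all add: matrix_add_ldistrib)

lemma matrix_vector_mult_sum_left: "(\<Sum>i\<in>S. f i) *v x = (\<Sum>i\<in>S. f i *v x)"
  by (induction S rule: infinite_finite_induct) (simp_all add: matrix_vector_mult_add_rdistrib)

lemma outer_add_diff:
  "outer (x + y) (x + y) + outer (x - y) (x - y) = 2 *\<^sub>R (outer x x + outer y y)"
  by (simp add: outer_def vec_eq_iff algebra_simps)

lemma inner_matrix_vector_commute:
  fixes L :: "real^'n^'n"
  assumes "transpose L = L"
  shows "x \<bullet> (L *v y) = y \<bullet> (L *v x)"
  by (metis assms dot_lmul_matrix inner_commute vector_transpose_matrix)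

lemma sum_outer_orthonormal:
  fixes u :: "'n::finite \<Rightarrow> real^'n"
  assumes "\<And>i j. u i \<bullet> u j = (if i = j then 1 else 0)"
  shows "(\<Sum>i\<in>UNIV. outer (u i) (u i)) = mat 1"
proof -
  define U :: "real^'n^'n" where "U = (\<chi> p i. u i $ p)"
  have "transpose U ** U = mat 1"
    by (simp add: vec_eq_iff matrix_matrix_mult_def transpose_def U_def mat_def
          assms[symmetric] inner_vec_def)
  then have "U ** transpose U = mat 1"
    using matrix_left_right_inverse by blast
  moreover have "U ** transpose U = (\<Sum>i\<in>UNIV. outer (u i) (u i))"
    by (simp add: vec_eq_iff matrix_matrix_mult_def transpose_def U_def outer_def sum_component)
  ultimately show ?thesis by simp
qed

lemma orthonormal_vector_expansion:
  fixes u :: "'n::finite \<Rightarrow> real^'n"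
  assumes "\<And>i j. u i \<bullet> u j = (if i = j then 1 else 0)"
  shows "(\<Sum>i\<in>UNIV. (u i \<bullet> x) *\<^sub>R u i) = x"
  using arg_cong[OF sum_outer_orthonormal[OF assms], of "\<lambda>A. A *v x"]
  by (simp add: matrix_vector_mult_sum_left outer_mult_vector)

lemma orthonormal_matrix_expansion:
  fixes u :: "'n::finite \<Rightarrow> real^'n" and M :: "real^'n^'n"
  assumes "\<And>i j. u i \<bullet> u j = (if i = j then 1 else 0)"
  shows "(\<Sum>i\<in>UNIV. \<Sum>j\<in>UNIV. (u i \<bullet> (M *v u j)) *\<^sub>R outer (u i) (u j)) = M"
proof -
  have "(\<Sum>i\<in>UNIV. \<Sum>j\<in>UNIV. (u i \<bullet> (M *v u j)) *\<^sub>R outer (u i) (u j))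
      = (\<Sum>j\<in>UNIV. outer (\<Sum>i\<in>UNIV. (u i \<bullet> (M *v u j)) *\<^sub>R u i) (u j))"
    by (subst sum.swap) (simp add: outer_sum_left outer_scaleR_left)
  also have "\<dots> = (\<Sum>j\<in>UNIV. M ** outer (u j) (u j))"
    by (simp add: orthonormal_vector_expansion[OF assms] matrix_mult_outer)
  also have "\<dots> = M"
    by (simp add: matrix_mult_sum_right[symmetric] sum_outer_orthonormal[OF assms])
  finally show ?thesis .
qed

lemma sum_symmetric_pairs:
  fixes g :: "'a \<Rightarrow> 'a \<Rightarrow> 'b::real_vector"
  assumes "\<And>i j. a j i = a i j"
  shows "(\<Sum>i\<in>A. \<Sum>j\<in>A. (a i j / 2) *\<^sub>R (g i j + g j i)) = (\<Sum>i\<in>A. \<Sum>j\<in>A. a i j *\<^sub>R g i j)"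
proof -
  have "(\<Sum>i\<in>A. \<Sum>j\<in>A. (a i j / 2) *\<^sub>R g j i) = (\<Sum>i\<in>A. \<Sum>j\<in>A. (a i j / 2) *\<^sub>R g i j)"
    by (subst sum.swap) (simp add: assms)
  then have "(\<Sum>i\<in>A. \<Sum>j\<in>A. (a i j / 2) *\<^sub>R (g i j + g j i))
      = (\<Sum>i\<in>A. \<Sum>j\<in>A. (a i j / 2) *\<^sub>R g i j + (a i j / 2) *\<^sub>R g i j)"
    by (simp add: scaleR_add_right sum.distrib)
  also have "\<dots> = (\<Sum>i\<in>A. \<Sum>j\<in>A. a i j *\<^sub>R g i j)"
    by (simp flip: scaleR_add_left)
  finally show ?thesis .
qed

lemma sum_product_weights_pairs:
  fixes f :: "'a \<Rightarrow> 'b::real_vector"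
  assumes "(\<Sum>i\<in>A. lam i) = 1"
  shows "(\<Sum>i\<in>A. \<Sum>j\<in>A. (lam i * lam j / 2) *\<^sub>R (f i + f j)) = (\<Sum>i\<in>A. lam i *\<^sub>R f i)"
proof -
  have "(\<Sum>i\<in>A. \<Sum>j\<in>A. (lam i * lam j / 2) *\<^sub>R (f i + f j))
      = (\<Sum>i\<in>A. \<Sum>j\<in>A. (lam i * lam j) *\<^sub>R f i)"
    by (rule sum_symmetric_pairs[where g = "\<lambda>i j. f i"]) simp
  also have "\<dots> = (\<Sum>i\<in>A. (lam i * (\<Sum>j\<in>A. lam j)) *\<^sub>R f i)"
    by (simp add: sum_distrib_left scaleR_sum_left)
  finally show ?thesis by (simp add: assms)
qed

lemma pmf_index_pmf:
  assumes "\<And>i. lam i \<ge> 0" and "(\<Sum>i\<in>UNIV. lam i) = 1"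
  shows "pmf (index_pmf lam) i = lam (i::'n::finite)"
  unfolding index_pmf_def
  by (rule pmf_embed_pmf) (use assms in \<open>simp_all add: nn_integral_count_space_finite\<close>)

lemma set_pmf_sample_pmf: "set_pmf (sample_pmf lam) \<subseteq> UNIV \<times> UNIV \<times> {-1, 1}"
  by (auto simp: sample_pmf_def)

lemma expectation_sample_pmf:
  fixes lam :: "'n::finite \<Rightarrow> real" and f :: "'n \<times> 'n \<times> real \<Rightarrow> 'b::{banach, second_countable_topology}"
  assumes "\<And>i. lam i \<ge> 0" and "(\<Sum>i\<in>UNIV. lam i) = 1"
  shows "measure_pmf.expectation (sample_pmf lam) f =
    (\<Sum>I\<in>UNIV. \<Sum>J\<in>UNIV. (lam I * lam J / 2) *\<^sub>R (f (I, J, 1) + f (I, J, -1)))"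
proof -
  have "measure_pmf.expectation (pmf_of_set {-1, 1::real}) g = (1 / 2) *\<^sub>R (g 1 + g (-1))"
    for g :: "real \<Rightarrow> 'b"
    by (subst integral_measure_pmf[of "{-1, 1}"]) (simp_all add: scaleR_add_right add.commute)
  then show ?thesis
    unfolding sample_pmf_def
    by (simp add: pmf_expectation_bind[where A = UNIV] pmf_index_pmf[OF assms]
          scaleR_sum_right)
qed

lemma norm_sample_w:
  assumes "\<And>i j. u i \<bullet> u j = (if i = j then 1 else 0)" and "\<omega> \<in> set_pmf (sample_pmf lam)"
  shows "norm (sample_w u \<omega>) = 1"
proof -
  obtain I J s where \<omega>: "\<omega> = (I, J, s)" and s: "s * s = 1"
    using set_pmf_sample_pmf[of lam] assms(2) by (cases \<omega>) auto
  have "sample_w u \<omega> \<bullet> sample_w u \<omega> = 1"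
  proof (cases "I = J")
    case False
    with s show ?thesis
      by (simp add: \<omega> sample_w_def inner_add_left inner_add_right assms(1) algebra_simps
            real_sqrt_mult[symmetric])
  qed (simp add: \<omega> sample_w_def assms(1))
  then show ?thesis by (simp add: norm_eq_1)
qed

lemma outer_sample_w_sign_sum:
  "outer (sample_w u (I, J, 1)) (sample_w u (I, J, 1)) + outer (sample_w u (I, J, -1)) (sample_w u (I, J, -1))
     = outer (u I) (u I) + outer (u J) (u J)"
proof (cases "I = J")
  case False
  have "(1 / sqrt 2) * (1 / sqrt 2) = (1 / 2 :: real)"
    by (simp add: real_sqrt_mult[symmetric])
  with False have "outer (sample_w u (I, J, 1)) (sample_w u (I, J, 1)) + outer (sample_w u (I, J, -1)) (sample_w u (I, J, -1))
      = (1 / 2) *\<^sub>R (outer (u I + u J) (u I + u J) + outer (u I - u J) (u I - u J))"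
    by (simp add: sample_w_def outer_scaleR_left outer_scaleR_right flip: scaleR_add_right)
  then show ?thesis
    by (simp only: outer_add_diff scaleR_scaleR) simp
qed (simp add: sample_w_def)

lemma sample_Ltilde_sign_sum:
  fixes L :: "real^'n^'n"
  assumes "transpose L = L" and "lam I \<noteq> 0" and "lam J \<noteq> 0"
  shows "(lam I * lam J / 2) *\<^sub>R (sample_Ltilde lam u L (I, J, 1) + sample_Ltilde lam u L (I, J, -1))
     = ((u I \<bullet> (L *v u J)) / 2) *\<^sub>R (outer (u I) (u J) + outer (u J) (u I))"
proof (cases "I = J")
  case True
  have "(c / 2) *\<^sub>R (M + M) = c *\<^sub>R M" for c and M :: "real^'n^'n"
    by (simp flip: scaleR_2)
  with True show ?thesis
    using assms(2)
    by (simp add: sample_Ltilde_def sample_ell_def sample_w_def power2_eq_square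
          scaleR_add_right flip: scaleR_add_left)
next
  case False
  define a where "a i j = u i \<bullet> (L *v u j)" for i j
  have "a J I = a I J"
    unfolding a_def by (rule inner_matrix_vector_commute[OF assms(1)])
  moreover have ell: "sample_ell u L (I, J, s) = (a I I + s * (a I J + a J I) + s * s * a J J) / 2" for s
    using False
    by (simp add: sample_ell_def sample_w_def a_def inner_add_left inner_add_right
          matrix_vector_right_distrib algebra_simps real_sqrt_mult[symmetric])
  ultimately have "sample_ell u L (I, J, 1) - sample_ell u L (I, J, -1) = 2 * a I J"
    by (simp add: ell[of 1] ell[of "-1"] field_simps)
  moreover have "sample_Ltilde lam u L (I, J, 1) + sample_Ltilde lam u L (I, J, -1)
      = ((sample_ell u L (I, J, 1) - sample_ell u L (I, J, -1)) / (2 * lam I * lam J)) *\<^sub>R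
          (outer (u I) (u J) + outer (u J) (u I))"
    using False by (simp add: sample_Ltilde_def diff_divide_distrib scaleR_diff_left)
  ultimately show ?thesis
    using assms(2,3) by (simp add: a_def)
qed

theorem lemma2:
  fixes lam :: "'n::finite \<Rightarrow> real"
    and u :: "'n \<Rightarrow> real^'n"
    and W L :: "real^'n^'n"
  assumes orthonormal: "\<And>i j. u i \<bullet> u j = (if i = j then 1 else 0)"
    and lam_pos: "\<And>i. lam i > 0"
    and lam_sum: "(\<Sum>i\<in>UNIV. lam i) = 1"
    and W_def: "W = (\<Sum>i\<in>UNIV. lam i *\<^sub>R outer (u i) (u i))"
    and L_sym: "transpose L = L"
  shows "(\<forall>\<omega>\<in>set_pmf (sample_pmf lam). norm (sample_w u \<omega>) = 1)
       \<and> measure_pmf.expectation (sample_pmf lam) (\<lambda>\<omega>. outer (sample_w u \<omega>) (sample_w u \<omega>)) = W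
       \<and> measure_pmf.expectation (sample_pmf lam) (sample_Ltilde lam u L) = L"
proof (intro conjI)
  have lam_nonneg: "\<And>i. lam i \<ge> 0" and lam_nonzero: "\<And>i. lam i \<noteq> 0"
    using lam_pos by (simp_all add: less_imp_le less_imp_neq[symmetric])
  show "\<forall>\<omega>\<in>set_pmf (sample_pmf lam). norm (sample_w u \<omega>) = 1"
    using norm_sample_w[OF orthonormal] by blast
  show "measure_pmf.expectation (sample_pmf lam) (\<lambda>\<omega>. outer (sample_w u \<omega>) (sample_w u \<omega>)) = W"
    unfolding expectation_sample_pmf[OF lam_nonneg lam_sum] outer_sample_w_sign_sum W_def
    by (rule sum_product_weights_pairs[OF lam_sum])
  have "measure_pmf.expectation (sample_pmf lam) (sample_Ltilde lam u L)
      = (\<Sum>I\<in>UNIV. \<Sum>J\<in>UNIV. ((u I \<bullet> (L *v u J)) / 2) *\<^sub>R (outer (u I) (u J) + outer (u J) (u I)))"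
    by (simp add: expectation_sample_pmf[OF lam_nonneg lam_sum] sample_Ltilde_sign_sum L_sym lam_nonzero)
  also have "\<dots> = (\<Sum>I\<in>UNIV. \<Sum>J\<in>UNIV. (u I \<bullet> (L *v u J)) *\<^sub>R outer (u I) (u J))"
    by (rule sum_symmetric_pairs) (rule inner_matrix_vector_commute[OF L_sym])
  also have "\<dots> = L"
    by (rule orthonormal_matrix_expansion[OF orthonormal])
  finally show "measure_pmf.expectation (sample_pmf lam) (sample_Ltilde lam u L) = L" .
qed

end
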